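(* In the epoch setting described in the context, at least a $\frac{1}{12}$ fraction of the tuples in $S^{(1)}\times S^{(2)}\times\cdots\times S^{(\rho)}$ are $I$-covering for every $I\in\mathcal{I}$ (simultaneously).
   Context: Let $n\ge 2$ and $k\ge1$, $\Delta$ be natural numbers, $\mathcal{G}=\langle G_1,\dots,G_L\rangle$ a temporal graph (sequence of graphs on a common $n$-element vertex set $V$), and $T$ a spanning tree of its underlying graph (the union of the snapshots). A snapshot is $k$-edge-deficient w.r.t. $T$ if it contains all but at most $k$ edges of $T$. Let $N=2(n-1)$, fix a DFS tour of $T$ from a root $r$ traversing each edge twice, with cyclic vertex sequence $(v_1,\dots,v_{N+1})$, $v_{N+1}=v_1=r$, tour edges $e_q=\{v_q,v_{q+1}\}$. Circular intervals: $[\![i,j]\!]=\{i,\dots,j\}$ if $i\le j$, $\{i,\dots,N,1,\dots,j\}$ if $i>j$; $[\![i,j[\![=[\![i,j]\!]\setminus\{j\}$. Roundabout process on a sequence $H_1,\dots,H_t$ of graphs: agents $a_1,\dots,a_N$, $s_i(0)=i$; at step $\tau$, if $s_i(\tau-1)=q$ then $s_i(\tau)=(q\bmod N)+1$ if $e_q\in E(H_\tau)$, else $q$; visited states $D_i(\tau)=[\![i,s_i(\tau)]\!]$, $D_i(0)=\{i\}$; active sets $A(0)=$ all agents, and $A(\tau)$ is obtained from $A(\tau-1)$ by repeatedly removing an arbitrary agent $a_i$ with $D_i(\tau)\subseteq\bigcup D_j(\tau)$ over the other current agents, until none remains. Let $t=\lfloor N/(2k)\rfloor$ and $\rho=\lceil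 18k\ln(6k)\rceil$. Assume an initial part of $[L]$ is partitioned into $\rho$ consecutive intervals (epochs), each containing at least $\Delta+t$ snapshots that are $k$-edge-deficient w.r.t. $T$; each epoch's first $\Delta$ time steps form its repositioning part, and the rest (containing at least $t$ such snapshots) is its roundabout part. In epoch $i$, run the roundabout process for $t$ steps on the first $t$ $k$-edge-deficient snapshots of its roundabout part, let $A^{(i)}$ be the active agents after step $t$ and $S^{(i)}$ their initial states. Let $\bigcup_{i\in[\rho]}S^{(i)}=\{m_1<\dots<m_d\}$, $I_j=[\![m_j,m_{j+1}[\![$ for $j\in[d-1]$, $I_d=[\![m_d,m_1[\![$, and $\mathcal{I}=\{I_1,\dots,I_d\}$. For $I\in\mathcal{I}$, a tuple $(s_1,\dots,s_\rho)\in S^{(1)}\times\cdots\times S^{(\rho)}$ is $I$-missing if for every $i\in[\rho]$ the agent of $A^{(i)}$ with initial state $s_i$ does not visit all states of $I$ in the roundabout process of epoch $i$; it is $I$-covering if it is not $I$-missing. *)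

theory Defs
  imports Complex_Main "HOL-Library.FuncSet"
begin

definition simple_graph :: "'a set \<Rightarrow> 'a set set \<Rightarrow> bool" where
  "simple_graph V E \<longleftrightarrow> E \<subseteq> {e. e \<subseteq> V \<and> card e = 2}"

definition connected_on :: "'a set \<Rightarrow> 'a set set \<Rightarrow> bool" where
  "connected_on V E \<longleftrightarrow> (\<forall>x\<in>V. \<forall>y\<in>V. (x, y) \<in> {(a, b). {a, b} \<in> E}\<^sup>*)"

definition spanning_tree :: "'a set \<Rightarrow> 'a set set \<Rightarrow> 'a set set \<Rightarrow> bool" where
  "spanning_tree V U T \<longleftrightarrow> T \<subseteq> U \<and> connected_on V T \<and>
     (\<forall>f\<in>T. \<not> connected_on V (T - {f}))"

definition dfs_tour :: "'a set set \<Rightarrow> 'a \<Rightarrow> nat \<Rightarrow> (nat \<Rightarrow> 'a) \<Rightarrow> bool" where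
  "dfs_tour T r N v \<longleftrightarrow> v 1 = r \<and> v (N + 1) = r \<and>
     (\<forall>q\<in>{1..N}. {v q, v (Suc q)} \<in> T) \<and>
     (\<forall>f\<in>T. card {q\<in>{1..N}. {v q, v (Suc q)} = f} = 2)"

definition edge_deficient :: "nat \<Rightarrow> 'a set set \<Rightarrow> 'a set set \<Rightarrow> bool" where
  "edge_deficient k T E \<longleftrightarrow> card (T - E) \<le> k"

definition cint :: "nat \<Rightarrow> nat \<Rightarrow> nat \<Rightarrow> nat set" where
  "cint N i j = (if i \<le> j then {i..j} else {i..N} \<union> {1..j})"

definition cinto :: "nat \<Rightarrow> nat \<Rightarrow> nat \<Rightarrow> nat set" where
  "cinto N i j = cint N i j - {j}"

text \<open>State of agent a_i after tau steps; e q is the q-th tour edge, H tau the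
  tau-th graph of the sequence.\<close>
fun rstate :: "nat \<Rightarrow> (nat \<Rightarrow> 'a set) \<Rightarrow> (nat \<Rightarrow> 'a set set) \<Rightarrow> nat \<Rightarrow> nat \<Rightarrow> nat" where
  "rstate N e H i 0 = i"
| "rstate N e H i (Suc \<tau>) =
     (let q = rstate N e H i \<tau> in if e q \<in> H (Suc \<tau>) then q mod N + 1 else q)"

definition visited :: "nat \<Rightarrow> (nat \<Rightarrow> 'a set) \<Rightarrow> (nat \<Rightarrow> 'a set set) \<Rightarrow> nat \<Rightarrow> nat \<Rightarrow> nat set" where
  "visited N e H i \<tau> = cint N i (rstate N e H i \<tau>)"

definition remove_step :: "(nat \<Rightarrow> nat set) \<Rightarrow> (nat set \<times> nat set) set" where
  "remove_step D = {(A, A - {i}) | A i. i \<in> A \<and> D i \<subseteq> (\<Union>j\<in>A - {i}. D j)}"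

definition prune_outcome :: "(nat \<Rightarrow> nat set) \<Rightarrow> nat set \<Rightarrow> nat set \<Rightarrow> bool" where
  "prune_outcome D A A' \<longleftrightarrow> (A, A') \<in> (remove_step D)\<^sup>* \<and>
     \<not> (\<exists>i\<in>A'. D i \<subseteq> (\<Union>j\<in>A' - {i}. D j))"

text \<open>Agents are identified with their initial states 1..N. Act tau is a valid
  sequence of active sets A(tau) for tau = 0..t.\<close>
definition roundabout_active ::
  "nat \<Rightarrow> (nat \<Rightarrow> 'a set) \<Rightarrow> (nat \<Rightarrow> 'a set set) \<Rightarrow> nat \<Rightarrow> (nat \<Rightarrow> nat set) \<Rightarrow> bool" where
  "roundabout_active N e H t Act \<longleftrightarrow> Act 0 = {1..N} \<and>
     (\<forall>\<tau>\<in>{1..t}. prune_outcome (\<lambda>i. visited N e H i \<tau>) (Act (\<tau> - 1)) (Act \<tau>))"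

text \<open>For M = {m_1 < ... < m_d}: I_j = [[m_j, m_(j+1)[[ and I_d = [[m_d, m_1[[.\<close>
definition interval_family :: "nat \<Rightarrow> nat set \<Rightarrow> nat set set" where
  "interval_family N M =
     (let ms = sorted_list_of_set M; d = length ms in
       {cinto N (ms ! j) (ms ! ((j + 1) mod d)) | j. j < d})"

end

theory Submission
  imports Defs
begin

(* Within an epoch the roundabout runs fewer than N steps, so every agent has visited a circular
   interval starting at its initial state, and pruning keeps these intervals an irredundant cover
   of the N states.  In an irredundant cover by circular intervals no two current positions
   coincide and no state is covered three times; as each k-edge-deficient snapshot blocks at most
   2k tour edges, double counting the sizes of the intervals and the blocked steps leaves fewer
   than 6k active agents.  Every interval of the family lies between consecutive surviving initial
   states, hence inside one visited interval of every epoch, so a tuple misses it with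
   probability at most (1 - 1/(6k))^rho; a union bound over the fewer than 6k rho intervals and
   the choice of rho leave at least a 1/12 fraction of covering tuples. *)

section \<open>Circular distance and circular intervals\<close>

definition fwd_dist :: "nat \<Rightarrow> nat \<Rightarrow> nat \<Rightarrow> nat" where
  "fwd_dist N u z = (if u \<le> z then z - u else z + N - u)"

lemma fwd_dist_self [simp]: "fwd_dist N u u = 0"
  by (simp add: fwd_dist_def)

lemma fwd_dist_less: "u \<in> {1..N} \<Longrightarrow> z \<in> {1..N} \<Longrightarrow> fwd_dist N u z < N"
  by (auto simp: fwd_dist_def)

lemma fwd_dist_inj:
  "u \<in> {1..N} \<Longrightarrow> z \<in> {1..N} \<Longrightarrow> w \<in> {1..N} \<Longrightarrow>
   fwd_dist N u z = fwd_dist N u w \<Longrightarrow> z = w"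
  by (auto simp: fwd_dist_def split: if_splits)

lemma fwd_dist_add_cases:
  "u \<in> {1..N} \<Longrightarrow> z \<in> {1..N} \<Longrightarrow> w \<in> {1..N} \<Longrightarrow>
   fwd_dist N u z + fwd_dist N z w = fwd_dist N u w \<or> fwd_dist N u z + fwd_dist N z w = fwd_dist N u w + N"
  unfolding fwd_dist_def by (cases "u \<le> z"; cases "z \<le> w"; cases "u \<le> w"; simp; arith)

lemma fwd_dist_add_swap:
  "u \<in> {1..N} \<Longrightarrow> z \<in> {1..N} \<Longrightarrow> u \<noteq> z \<Longrightarrow> fwd_dist N u z + fwd_dist N z u = N"
  by (auto simp: fwd_dist_def)

lemma mem_cint_iff:
  "i \<in> {1..N} \<Longrightarrow> j \<in> {1..N} \<Longrightarrow>
   w \<in> cint N i j \<longleftrightarrow> w \<in> {1..N} \<and> fwd_dist N i w \<le> fwd_dist N i j"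
  by (auto simp: cint_def fwd_dist_def)

lemma cint_subset_range: "i \<in> {1..N} \<Longrightarrow> j \<in> {1..N} \<Longrightarrow> cint N i j \<subseteq> {1..N}"
  by (auto simp: mem_cint_iff)

lemma card_cint: "i \<in> {1..N} \<Longrightarrow> j \<in> {1..N} \<Longrightarrow> card (cint N i j) = Suc (fwd_dist N i j)"
  by (auto simp: cint_def fwd_dist_def card_Un_disjoint)

lemma fwd_dist_split:
  "s \<in> {1..N} \<Longrightarrow> p \<in> {1..N} \<Longrightarrow> z \<in> cint N s p \<Longrightarrow>
   fwd_dist N s z + fwd_dist N z p = fwd_dist N s p"
  by (auto simp: cint_def fwd_dist_def split: if_splits)

lemma cint_subset_union:
  assumes range: "s \<in> {1..N}" "p \<in> {1..N}" "s1 \<in> {1..N}" "p1 \<in> {1..N}" "s2 \<in> {1..N}" "p2 \<in> {1..N}"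
    and z: "z \<in> cint N s p" "z \<in> cint N s1 p1" "z \<in> cint N s2 p2"
    and later_start: "fwd_dist N s z \<le> fwd_dist N s1 z"
    and earlier_end: "fwd_dist N z p \<le> fwd_dist N z p2"
  shows "cint N s p \<subseteq> cint N s1 p1 \<union> cint N s2 p2"
proof
  fix w assume w: "w \<in> cint N s p"
  have zN: "z \<in> {1..N}" and wN: "w \<in> {1..N}"
    using z(1) w cint_subset_range[OF range(1,2)] by auto
  note split = fwd_dist_split[OF range(1,2) z(1)] fwd_dist_split[OF range(3,4) z(2)]
    fwd_dist_split[OF range(5,6) z(3)]
  have "fwd_dist N s w \<le> fwd_dist N s p" using w range by (simp add: mem_cint_iff)
  note add = fwd_dist_add_cases[OF range(1) wN zN] fwd_dist_add_cases[OF range(3) wN zN]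
    fwd_dist_add_cases[OF range(1) zN wN] fwd_dist_add_cases[OF range(5) zN wN]
  note less = fwd_dist_less[OF zN wN] fwd_dist_less[OF wN zN] fwd_dist_less[OF range(1) wN]
    fwd_dist_less[OF range(3) wN] fwd_dist_less[OF range(5) wN] fwd_dist_less[OF range(5) range(6)]
  show "w \<in> cint N s1 p1 \<union> cint N s2 p2"
  proof (cases "fwd_dist N s w \<le> fwd_dist N s z")
    case True
    then have "fwd_dist N s1 w \<le> fwd_dist N s1 p1"
      using split add less later_start earlier_end \<open>fwd_dist N s w \<le> fwd_dist N s p\<close> by linarith
    then show ?thesis using wN range by (simp add: mem_cint_iff)
  next
    case False
    then have "fwd_dist N s2 w \<le> fwd_dist N s2 p2"
      using split add less later_start earlier_end \<open>fwd_dist N s w \<le> fwd_dist N s p\<close> by linarith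
    then show ?thesis using wN range by (simp add: mem_cint_iff)
  qed
qed

lemma cint_subset_cint:
  assumes range: "s \<in> {1..N}" "p \<in> {1..N}" "a \<in> {1..N}" "y \<in> {1..N}"
    and "a \<in> cint N s y" "y \<in> cint N s p"
  shows "cint N a y \<subseteq> cint N s p"
proof
  fix w assume w: "w \<in> cint N a y"
  then have wN: "w \<in> {1..N}" using cint_subset_range[OF range(3,4)] by blast
  have "fwd_dist N s a + fwd_dist N a w = fwd_dist N s w \<or> fwd_dist N s a + fwd_dist N a w = fwd_dist N s w + N"
    by (rule fwd_dist_add_cases[OF range(1,3) wN])
  moreover have "fwd_dist N s a + fwd_dist N a y = fwd_dist N s y"
    using fwd_dist_split[OF range(1,4)] \<open>a \<in> cint N s y\<close> by simp
  moreover have "fwd_dist N a w \<le> fwd_dist N a y" "fwd_dist N s y \<le> fwd_dist N s p"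
    using w \<open>y \<in> cint N s p\<close> range by (simp_all add: mem_cint_iff)
  ultimately have "fwd_dist N s w \<le> fwd_dist N s p"
    using fwd_dist_less[OF range(1) wN] fwd_dist_less[OF range(1) range(2)] by linarith
  then show "w \<in> cint N s p" using wN range by (simp add: mem_cint_iff)
qed

section \<open>Irredundant covers by circular intervals\<close>

definition irredundant :: "('i \<Rightarrow> 'a set) \<Rightarrow> 'i set \<Rightarrow> bool" where
  "irredundant D A \<longleftrightarrow> (\<forall>i\<in>A. \<not> D i \<subseteq> (\<Union>j\<in>A - {i}. D j))"

lemma irredundant_cint_inj_end:
  assumes A: "A \<subseteq> {1..N}" and p: "p ` A \<subseteq> {1..N}"
    and irr: "irredundant (\<lambda>s. cint N s (p s)) A"
  shows "inj_on p A"
proof (rule inj_onI, rule ccontr)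
  have contained: "cint N a (p a) \<subseteq> cint N b (p b)"
    if "a \<in> A" "b \<in> A" "p a = p b" "fwd_dist N a (p a) \<le> fwd_dist N b (p b)" for a b
  proof -
    have range: "a \<in> {1..N}" "p a \<in> {1..N}" "b \<in> {1..N}" "p b \<in> {1..N}"
      using that A p by auto
    have "p a \<in> cint N a (p a)" "p a \<in> cint N b (p b)"
      using range \<open>p a = p b\<close> by (auto simp: mem_cint_iff)
    from cint_subset_union[OF range range(3,4) this this(2)] show ?thesis
      using that by simp
  qed
  fix x y assume "x \<in> A" "y \<in> A" "p x = p y" "x \<noteq> y"
  then have "cint N x (p x) \<subseteq> cint N y (p y) \<or> cint N y (p y) \<subseteq> cint N x (p x)"
    using contained[of x y] contained[of y x] by linarith
  then show False using irr \<open>x \<in> A\<close> \<open>y \<in> A\<close> \<open>x \<noteq> y\<close> unfolding irredundant_def by blast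
qed

lemma irredundant_cint_multiplicity:
  assumes A: "A \<subseteq> {1..N}" and p: "p ` A \<subseteq> {1..N}"
    and irr: "irredundant (\<lambda>s. cint N s (p s)) A"
  shows "card {s\<in>A. z \<in> cint N s (p s)} \<le> 2"
proof (rule ccontr)
  let ?Z = "{s\<in>A. z \<in> cint N s (p s)}"
  assume "\<not> card ?Z \<le> 2"
  then have "Suc (Suc (Suc 0)) \<le> card ?Z" by simp
  then obtain a b c where abc: "a \<in> ?Z" "b \<in> ?Z" "c \<in> ?Z" "a \<noteq> b" "a \<noteq> c" "b \<noteq> c"
    by (auto simp: card_le_Suc_iff)
  have redundant: "False"
    if xyw: "x \<in> {a, b, c}" "y \<in> {a, b, c}" "w \<in> {a, b, c}" "x \<noteq> y" "x \<noteq> w"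
      and "fwd_dist N x z \<le> fwd_dist N y z" "fwd_dist N z (p x) \<le> fwd_dist N z (p w)" for x y w
  proof -
    have inZ: "x \<in> ?Z" "y \<in> ?Z" "w \<in> ?Z" using xyw abc by auto
    then have "cint N x (p x) \<subseteq> cint N y (p y) \<union> cint N w (p w)"
      using A p that(6,7) by (intro cint_subset_union) auto
    then show False using irr inZ xyw(4,5) unfolding irredundant_def by blast
  qed
  \<comment> \<open>Of three intervals through z, one starts no earlier than a second and ends no later
    than a third.\<close>
  show False
    using redundant[of a b c] redundant[of a c b] redundant[of b a c]
      redundant[of b c a] redundant[of c a b] redundant[of c b a] abc by fastforce
qed

lemma sum_card_irredundant_cint_le:
  assumes A: "A \<subseteq> {1..N}" and p: "p ` A \<subseteq> {1..N}"
    and irr: "irredundant (\<lambda>s. cint N s (p s)) A"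
  shows "(\<Sum>s\<in>A. card (cint N s (p s))) \<le> 2 * N"
proof -
  have finA: "finite A" using A finite_subset by blast
  have "cint N s (p s) = {z\<in>{1..N}. z \<in> cint N s (p s)}" if "s \<in> A" for s
  proof -
    have "cint N s (p s) \<subseteq> {1..N}" using that A p by (intro cint_subset_range) auto
    then show ?thesis by blast
  qed
  then have "(\<Sum>s\<in>A. card (cint N s (p s))) = (\<Sum>s\<in>A. card {z\<in>{1..N}. z \<in> cint N s (p s)})"
    by (intro sum.cong) auto
  also have "\<dots> = (\<Sum>z\<in>{1..N}. card {s\<in>A. z \<in> cint N s (p s)})"
    using finA by (intro sum_multicount_gen) auto
  also have "\<dots> \<le> of_nat (card {1..N}) * 2"
    using irredundant_cint_multiplicity[OF assms] by (intro sum_bounded_above)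
  finally show ?thesis by simp
qed

section \<open>The roundabout process\<close>

lemma prune_outcome_subset_UN:
  assumes "prune_outcome D A A'"
  shows "A' \<subseteq> A" and "(\<Union>i\<in>A'. D i) = (\<Union>i\<in>A. D i)"
proof -
  have "(A, A') \<in> (remove_step D)\<^sup>*" using assms by (simp add: prune_outcome_def)
  then have "A' \<subseteq> A \<and> (\<Union>i\<in>A'. D i) = (\<Union>i\<in>A. D i)"
  proof (induction rule: rtrancl_induct)
    case (step B C)
    then obtain i where "C = B - {i}" "D i \<subseteq> (\<Union>j\<in>B - {i}. D j)"
      by (auto simp: remove_step_def)
    then have "C \<subseteq> B" "(\<Union>j\<in>C. D j) = (\<Union>j\<in>B. D j)" by blast+
    with step.IH show ?case by blast
  qed simp
  then show "A' \<subseteq> A" and "(\<Union>i\<in>A'. D i) = (\<Union>i\<in>A. D i)" by simp_all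
qed

lemma prune_outcome_irredundant: "prune_outcome D A A' \<Longrightarrow> irredundant D A'"
  by (simp add: prune_outcome_def irredundant_def)

definition blocked_steps ::
    "nat \<Rightarrow> (nat \<Rightarrow> 'a set) \<Rightarrow> (nat \<Rightarrow> 'a set set) \<Rightarrow> nat \<Rightarrow> nat \<Rightarrow> nat set" where
  "blocked_steps N e H s \<tau> = {x\<in>{1..\<tau>}. e (rstate N e H s (x - 1)) \<notin> H x}"

lemma rstate_in_range: "s \<in> {1..N} \<Longrightarrow> rstate N e H s \<tau> \<in> {1..N}"
proof (induction \<tau>)
  case (Suc \<tau>)
  then have "rstate N e H s \<tau> mod N + 1 \<in> {1..N}" by (simp add: Suc_leI)
  with Suc show ?case by (simp add: Let_def)
qed simp

lemma visited_subset_range: "s \<in> {1..N} \<Longrightarrow> visited N e H s \<tau> \<subseteq> {1..N}"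
  unfolding visited_def using cint_subset_range rstate_in_range by blast

lemma finite_blocked_steps [simp]: "finite (blocked_steps N e H s \<tau>)"
  by (simp add: blocked_steps_def)

lemma blocked_steps_Suc:
  "blocked_steps N e H s (Suc \<tau>) =
     blocked_steps N e H s \<tau> \<union> (if e (rstate N e H s \<tau>) \<notin> H (Suc \<tau>) then {Suc \<tau>} else {})"
  by (auto simp: blocked_steps_def le_Suc_eq)

lemma fwd_dist_rstate:
  assumes s: "s \<in> {1..N}" and "\<tau> < N"
  shows "fwd_dist N s (rstate N e H s \<tau>) + card (blocked_steps N e H s \<tau>) = \<tau>"
  using \<open>\<tau> < N\<close>
proof (induction \<tau>)
  case 0
  then show ?case by (simp add: blocked_steps_def)
next
  case (Suc \<tau>)
  let ?q = "rstate N e H s \<tau>"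
  have IH: "fwd_dist N s ?q + card (blocked_steps N e H s \<tau>) = \<tau>" using Suc by simp
  have new: "Suc \<tau> \<notin> blocked_steps N e H s \<tau>" by (simp add: blocked_steps_def)
  show ?case
  proof (cases "e ?q \<in> H (Suc \<tau>)")
    case True
    have q: "?q \<in> {1..N}" using rstate_in_range[OF s] .
    have "fwd_dist N s (?q mod N + 1) = fwd_dist N s ?q + 1"
      using q s Suc.prems IH by (cases "?q = N") (auto simp: fwd_dist_def)
    with True IH show ?thesis by (simp add: Let_def blocked_steps_Suc)
  next
    case False
    with IH new show ?thesis by (simp add: Let_def blocked_steps_Suc)
  qed
qed

lemma visited_Suc_mono:
  assumes s: "s \<in> {1..N}" and "Suc \<tau> < N"
  shows "visited N e H s \<tau> \<subseteq> visited N e H s (Suc \<tau>)"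
proof -
  have "card (blocked_steps N e H s (Suc \<tau>)) \<le> Suc (card (blocked_steps N e H s \<tau>))"
    by (simp add: blocked_steps_Suc card_insert_if)
  then have "fwd_dist N s (rstate N e H s \<tau>) \<le> fwd_dist N s (rstate N e H s (Suc \<tau>))"
    using fwd_dist_rstate[OF s, of \<tau> e H] fwd_dist_rstate[OF s, of "Suc \<tau>" e H] \<open>Suc \<tau> < N\<close>
    by simp
  then show ?thesis
    using s rstate_in_range[OF s, of e H \<tau>] rstate_in_range[OF s, of e H "Suc \<tau>"]
    by (auto simp: visited_def mem_cint_iff simp del: rstate.simps)
qed

lemma roundabout_active_prune:
  "roundabout_active N e H t A \<Longrightarrow> \<tau> \<in> {1..t} \<Longrightarrow>
   prune_outcome (\<lambda>s. visited N e H s \<tau>) (A (\<tau> - 1)) (A \<tau>)"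
  by (simp add: roundabout_active_def)

lemma roundabout_active_cover:
  assumes act: "roundabout_active N e H t A" and "t < N" and "\<tau> \<le> t"
  shows "A \<tau> \<subseteq> {1..N}" and "(\<Union>s\<in>A \<tau>. visited N e H s \<tau>) = {1..N}"
proof -
  have "A \<tau> \<subseteq> {1..N} \<and> (\<Union>s\<in>A \<tau>. visited N e H s \<tau>) = {1..N}"
    using \<open>\<tau> \<le> t\<close>
  proof (induction \<tau>)
    case 0
    have "visited N e H s 0 = {s}" for s by (simp add: visited_def cint_def)
    then show ?case using act by (simp add: roundabout_active_def)
  next
    case (Suc \<tau>)
    then have IH: "A \<tau> \<subseteq> {1..N}" "(\<Union>s\<in>A \<tau>. visited N e H s \<tau>) = {1..N}" by simp_all
    have grow: "visited N e H s \<tau> \<subseteq> visited N e H s (Suc \<tau>)"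
      and range: "visited N e H s (Suc \<tau>) \<subseteq> {1..N}" if "s \<in> A \<tau>" for s
    proof -
      have s: "s \<in> {1..N}" using that IH(1) by blast
      show "visited N e H s \<tau> \<subseteq> visited N e H s (Suc \<tau>)"
        by (rule visited_Suc_mono[OF s]) (use Suc.prems \<open>t < N\<close> in linarith)
      show "visited N e H s (Suc \<tau>) \<subseteq> {1..N}" by (rule visited_subset_range[OF s])
    qed
    have "(\<Union>s\<in>A \<tau>. visited N e H s (Suc \<tau>)) = {1..N}"
    proof
      show "(\<Union>s\<in>A \<tau>. visited N e H s (Suc \<tau>)) \<subseteq> {1..N}" using range by blast
      show "{1..N} \<subseteq> (\<Union>s\<in>A \<tau>. visited N e H s (Suc \<tau>))" using IH(2) grow by blast
    qed
    moreover note prune_outcome_subset_UN[OF roundabout_active_prune[OF act, of "Suc \<tau>"]]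
    ultimately show ?case using IH(1) Suc.prems by simp
  qed
  then show "A \<tau> \<subseteq> {1..N}" and "(\<Union>s\<in>A \<tau>. visited N e H s \<tau>) = {1..N}" by simp_all
qed

lemma roundabout_active_antimono:
  assumes act: "roundabout_active N e H t A" and "\<tau> \<le> t"
  shows "A t \<subseteq> A \<tau>"
proof -
  have "\<tau> \<le> t' \<Longrightarrow> t' \<le> t \<Longrightarrow> A t' \<subseteq> A \<tau>" for t'
  proof (induction t')
    case (Suc t')
    show ?case
    proof (cases "\<tau> = Suc t'")
      case False
      with Suc have "A t' \<subseteq> A \<tau>" by simp
      moreover have "A (Suc t') \<subseteq> A t'"
        using prune_outcome_subset_UN(1)[OF roundabout_active_prune[OF act, of "Suc t'"]] Suc.prems
        by simp
      ultimately show ?thesis by blast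
    qed simp
  qed simp
  then show ?thesis using \<open>\<tau> \<le> t\<close> by simp
qed

lemma roundabout_active_inj_rstate:
  assumes act: "roundabout_active N e H t A" and "t < N" and "\<tau> \<le> t"
  shows "inj_on (\<lambda>s. rstate N e H s \<tau>) (A \<tau>)"
proof (cases "\<tau> = 0")
  case False
  have "irredundant (\<lambda>s. cint N s (rstate N e H s \<tau>)) (A \<tau>)"
    using prune_outcome_irredundant[OF roundabout_active_prune[OF act]] False \<open>\<tau> \<le> t\<close>
    by (simp add: visited_def)
  moreover have A: "A \<tau> \<subseteq> {1..N}" by (rule roundabout_active_cover(1)[OF assms])
  moreover have "(\<lambda>s. rstate N e H s \<tau>) ` A \<tau> \<subseteq> {1..N}"
    using A rstate_in_range by blast
  ultimately show ?thesis by (rule irredundant_cint_inj_end[rotated 2])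
qed (simp add: inj_on_def)

lemma card_blocked_active_le:
  assumes act: "roundabout_active N e H t A" and "t < N" and x: "x \<in> {1..t}"
  shows "card {s\<in>A t. x \<in> blocked_steps N e H s t} \<le> card {q\<in>{1..N}. e q \<notin> H x}"
proof (rule card_inj_on_le)
  have "A t \<subseteq> A (x - 1)" by (rule roundabout_active_antimono[OF act]) (use x in auto)
  then have "{s\<in>A t. x \<in> blocked_steps N e H s t} \<subseteq> A (x - 1)" by blast
  moreover have "inj_on (\<lambda>s. rstate N e H s (x - 1)) (A (x - 1))"
    by (rule roundabout_active_inj_rstate[OF act \<open>t < N\<close>]) (use x in auto)
  ultimately show "inj_on (\<lambda>s. rstate N e H s (x - 1)) {s\<in>A t. x \<in> blocked_steps N e H s t}"
    by (rule inj_on_subset[rotated])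
  show "(\<lambda>s. rstate N e H s (x - 1)) ` {s\<in>A t. x \<in> blocked_steps N e H s t}
      \<subseteq> {q\<in>{1..N}. e q \<notin> H x}"
  proof (rule image_subsetI)
    fix s assume "s \<in> {s\<in>A t. x \<in> blocked_steps N e H s t}"
    then have "s \<in> {1..N}" and "e (rstate N e H s (x - 1)) \<notin> H x"
      using roundabout_active_cover(1)[OF act \<open>t < N\<close> order_refl] by (auto simp: blocked_steps_def)
    then show "rstate N e H s (x - 1) \<in> {q\<in>{1..N}. e q \<notin> H x}" using rstate_in_range by blast
  qed
qed simp

lemma sum_card_blocked_steps_le:
  assumes act: "roundabout_active N e H t A" and "t < N"
    and blocked: "\<forall>x\<in>{1..t}. card {q\<in>{1..N}. e q \<notin> H x} \<le> c"
  shows "(\<Sum>s\<in>A t. card (blocked_steps N e H s t)) \<le> t * c"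
proof -
  have "finite (A t)"
    using roundabout_active_cover(1)[OF act \<open>t < N\<close> order_refl] finite_subset by blast
  have "(\<Sum>s\<in>A t. card (blocked_steps N e H s t))
      = (\<Sum>s\<in>A t. card {x\<in>{1..t}. x \<in> blocked_steps N e H s t})"
    by (intro sum.cong refl arg_cong[where f = card]) (auto simp: blocked_steps_def)
  also have "\<dots> = (\<Sum>x\<in>{1..t}. card {s\<in>A t. x \<in> blocked_steps N e H s t})"
    using \<open>finite (A t)\<close> by (intro sum_multicount_gen) auto
  also have "\<dots> \<le> of_nat (card {1..t}) * c"
    using card_blocked_active_le[OF act \<open>t < N\<close>] blocked by (intro sum_bounded_above) (meson le_trans)
  finally show ?thesis by simp
qed

lemma card_roundabout_active_less:
  assumes act: "roundabout_active N e H t A" and "t < N" and "N < c * (t + 1)"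
    and blocked: "\<forall>x\<in>{1..t}. card {q\<in>{1..N}. e q \<notin> H x} \<le> c"
  shows "card (A t) < 3 * c"
proof (cases "t = 0")
  case True
  then show ?thesis using act \<open>N < c * (t + 1)\<close> by (simp add: roundabout_active_def)
next
  case False
  have A: "A t \<subseteq> {1..N}" by (rule roundabout_active_cover(1)[OF act \<open>t < N\<close> order_refl])
  have ends: "(\<lambda>s. rstate N e H s t) ` A t \<subseteq> {1..N}" using A rstate_in_range by blast
  have "irredundant (\<lambda>s. cint N s (rstate N e H s t)) (A t)"
    using prune_outcome_irredundant[OF roundabout_active_prune[OF act, of t]] False
    by (simp add: visited_def)
  from sum_card_irredundant_cint_le[OF A ends this]
  have visits: "(\<Sum>s\<in>A t. card (visited N e H s t)) \<le> 2 * N" by (simp add: visited_def)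
  have blocks: "(\<Sum>s\<in>A t. card (blocked_steps N e H s t)) \<le> t * c"
    by (rule sum_card_blocked_steps_le[OF act \<open>t < N\<close> blocked])
  have "card (visited N e H s t) + card (blocked_steps N e H s t) = t + 1" if "s \<in> A t" for s
  proof -
    have s: "s \<in> {1..N}" using that A by blast
    show ?thesis
      using card_cint[OF s rstate_in_range[OF s, of e H t]] fwd_dist_rstate[OF s \<open>t < N\<close>, of e H]
      by (simp add: visited_def)
  qed
  then have "card (A t) * (t + 1) = (\<Sum>s\<in>A t. card (visited N e H s t) + card (blocked_steps N e H s t))"
    by simp
  also have "\<dots> \<le> 2 * N + t * c" using visits blocks by (simp add: sum.distrib)
  also have "\<dots> < 3 * c * (t + 1)" using \<open>N < c * (t + 1)\<close> by (simp add: algebra_simps)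
  finally show ?thesis by (simp only: mult_less_cancel2)
qed

section \<open>Intervals between consecutive initial states\<close>

lemma interval_family_consecutive:
  assumes fin: "finite M" and M: "M \<subseteq> {1..N}" and I: "I \<in> interval_family N M"
  obtains a b where "a \<in> M" "b \<in> M" "I = cinto N a b"
    "\<And>z. z \<in> M \<Longrightarrow> z \<noteq> a \<Longrightarrow> fwd_dist N a b \<le> fwd_dist N a z"
proof -
  define ms where "ms = sorted_list_of_set M"
  define d where "d = length ms"
  obtain j where j: "j < d" and I_eq: "I = cinto N (ms ! j) (ms ! ((j + 1) mod d))"
    using I unfolding interval_family_def Let_def ms_def d_def by blast
  have set_ms: "set ms = M" using fin by (simp add: ms_def)
  have less: "ms ! i < ms ! i'" if "i < i'" "i' < d" for i i'
    using sorted_wrt_nth_less[OF strict_sorted_list_of_set] that by (simp add: ms_def d_def)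
  have le: "ms ! i \<le> ms ! i'" if "i \<le> i'" "i' < d" for i i'
    using sorted_nth_mono[OF sorted_sorted_list_of_set] that by (simp add: ms_def d_def)
  have in_M: "ms ! i \<in> M" if "i < d" for i
    using that set_ms nth_mem d_def by blast
  have N_bound: "ms ! i \<le> N" if "i < d" for i using in_M[OF that] M by auto
  show ?thesis
  proof (rule that[OF in_M[OF j] in_M I_eq])
    show "(j + 1) mod d < d" using j by simp
    fix z assume z: "z \<in> M" "z \<noteq> ms ! j"
    then obtain p where p: "p < d" "ms ! p = z" using set_ms d_def by (metis in_set_conv_nth)
    with z have "p \<noteq> j" by blast
    show "fwd_dist N (ms ! j) (ms ! ((j + 1) mod d)) \<le> fwd_dist N (ms ! j) z"
    proof (cases "j + 1 < d")
      case True
      then show ?thesis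
        using less[of j "j + 1"] less[of p j] le[of "j + 1" p] N_bound[of "j + 1"] p \<open>p \<noteq> j\<close>
        by (cases "j < p") (auto simp: fwd_dist_def)
    next
      case False
      then have "d = j + 1" using j by simp
      then show ?thesis
        using less[of 0 j] less[of p j] le[of 0 p] p \<open>p \<noteq> j\<close>
        by (cases "j = 0") (auto simp: fwd_dist_def)
    qed
  qed
qed

lemma interval_family_eq_image:
  "interval_family N M = (\<lambda>j. cinto N (sorted_list_of_set M ! j)
     (sorted_list_of_set M ! ((j + 1) mod card M))) ` {..<card M}"
  by (auto simp: interval_family_def Let_def)

lemma finite_interval_family: "finite (interval_family N M)"
  by (simp add: interval_family_eq_image)

lemma card_interval_family_le: "card (interval_family N M) \<le> card M"
  unfolding interval_family_eq_image by (metis card_image_le card_lessThan finite_lessThan)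

lemma card_interval_family_UN_le:
  assumes "finite K" and "\<And>i. i \<in> K \<Longrightarrow> card (S i) \<le> m"
  shows "card (interval_family N (\<Union>i\<in>K. S i)) \<le> card K * m"
proof -
  have "card (interval_family N (\<Union>i\<in>K. S i)) \<le> card (\<Union>i\<in>K. S i)"
    by (rule card_interval_family_le)
  also have "\<dots> \<le> (\<Sum>i\<in>K. card (S i))" by (rule card_UN_le[OF \<open>finite K\<close>])
  also have "\<dots> \<le> of_nat (card K) * m" using assms(2) by (rule sum_bounded_above)
  finally show ?thesis by simp
qed

lemma cinto_subset_cint_pred:
  assumes a: "a \<in> {1..N}" and b: "b \<in> {1..N}" and "a \<noteq> b"
  shows "cinto N a b \<subseteq> cint N a (if b = 1 then N else b - 1)"
proof
  define y where "y = (if b = 1 then N else b - 1)"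
  have y: "y \<in> {1..N}" "fwd_dist N a y + 1 = fwd_dist N a b"
    using a b \<open>a \<noteq> b\<close> by (auto simp: y_def fwd_dist_def)
  fix w assume "w \<in> cinto N a b"
  then have w: "w \<in> cint N a b" "w \<noteq> b" by (auto simp: cinto_def)
  then have wN: "w \<in> {1..N}" and "fwd_dist N a w \<le> fwd_dist N a b"
    using a b by (auto simp: mem_cint_iff)
  moreover have "fwd_dist N a w \<noteq> fwd_dist N a b" using fwd_dist_inj[OF a wN b] w(2) by blast
  ultimately show "w \<in> cint N a y" using a y by (simp add: mem_cint_iff)
qed

lemma interval_family_subset_cint:
  assumes fin: "finite M" and M: "M \<subseteq> {1..N}" and "S \<subseteq> M"
    and ends: "\<forall>s\<in>S. p s \<in> {1..N}" and cover: "(\<Union>s\<in>S. cint N s (p s)) = {1..N}"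
    and I: "I \<in> interval_family N M"
  shows "\<exists>s\<in>S. I \<subseteq> cint N s (p s)"
proof -
  obtain a b where a: "a \<in> M" and b: "b \<in> M" and I_eq: "I = cinto N a b"
    and first: "\<And>z. z \<in> M \<Longrightarrow> z \<noteq> a \<Longrightarrow> fwd_dist N a b \<le> fwd_dist N a z"
    using interval_family_consecutive[OF fin M I] by blast
  have aN: "a \<in> {1..N}" and bN: "b \<in> {1..N}" using a b M by auto
  show ?thesis
  proof (cases "a = b")
    case True
    then have "I = {}" by (simp add: I_eq cinto_def cint_def)
    moreover obtain s where "s \<in> S" using aN cover by blast
    ultimately show ?thesis by blast
  next
    case False
    \<comment> \<open>The interval covering the state y just before b cannot start strictly between a
      and b, as no state of M lies there, so it contains all of cinto N a b.\<close>
    define y where "y = (if b = 1 then N else b - 1)"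
    have yN: "y \<in> {1..N}" and y: "fwd_dist N a y + 1 = fwd_dist N a b"
      using aN bN False by (auto simp: y_def fwd_dist_def)
    obtain s where s: "s \<in> S" "y \<in> cint N s (p s)" using yN cover by blast
    have sN: "s \<in> {1..N}" "p s \<in> {1..N}" using s(1) \<open>S \<subseteq> M\<close> M ends by auto
    have "I \<subseteq> cint N a y"
      unfolding I_eq y_def by (rule cinto_subset_cint_pred[OF aN bN False])
    moreover have "a \<in> cint N s y"
    proof (cases "s = a")
      case False
      have "fwd_dist N a b \<le> fwd_dist N a s" using first s(1) \<open>S \<subseteq> M\<close> False by blast
      moreover have "fwd_dist N s a + fwd_dist N a s = N" using fwd_dist_add_swap[OF sN(1) aN] False by blast
      moreover note fwd_dist_add_cases[OF sN(1) aN yN] fwd_dist_less[OF sN(1) yN]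
      ultimately have "fwd_dist N s a \<le> fwd_dist N s y" using y by linarith
      then show ?thesis using sN aN yN by (simp add: mem_cint_iff)
    qed (use aN yN in \<open>simp add: mem_cint_iff\<close>)
    ultimately have "I \<subseteq> cint N s (p s)" using cint_subset_cint[OF sN aN yN _ s(2)] by blast
    then show ?thesis using s(1) by blast
  qed
qed

section \<open>Counting covering tuples\<close>

lemma card_PiE_le_covering_plus_missing:
  assumes K: "finite K" and F: "finite F" and fin: "\<And>i. i \<in> K \<Longrightarrow> finite (S i)"
    and hit: "\<And>I i. I \<in> F \<Longrightarrow> i \<in> K \<Longrightarrow> \<exists>s\<in>S i. P I i s"
  shows "card (PiE K S)
    \<le> card {f \<in> PiE K S. \<forall>I\<in>F. \<exists>i\<in>K. P I i (f i)} + card F * (\<Prod>i\<in>K. card (S i) - 1)"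
proof -
  define Good where "Good = {f \<in> PiE K S. \<forall>I\<in>F. \<exists>i\<in>K. P I i (f i)}"
  define Miss where "Miss I = PiE K (\<lambda>i. {s\<in>S i. \<not> P I i s})" for I
  have finMiss: "finite (Miss I)" for I
    unfolding Miss_def using K fin by (intro finite_PiE) auto
  have card_Miss: "card (Miss I) \<le> (\<Prod>i\<in>K. card (S i) - 1)" if I: "I \<in> F" for I
  proof -
    have "card (Miss I) = (\<Prod>i\<in>K. card {s\<in>S i. \<not> P I i s})"
      unfolding Miss_def using K by (rule card_PiE)
    also have "\<dots> \<le> (\<Prod>i\<in>K. card (S i) - 1)"
    proof (rule prod_mono)
      fix i assume i: "i \<in> K"
      obtain s where "s \<in> S i" "P I i s" using hit[OF I i] by blast
      then have "{s\<in>S i. \<not> P I i s} \<subseteq> S i - {s}" by blast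
      then have "card {s\<in>S i. \<not> P I i s} \<le> card (S i - {s})" using fin[OF i] by (intro card_mono) auto
      then show "0 \<le> card {s\<in>S i. \<not> P I i s} \<and> card {s\<in>S i. \<not> P I i s} \<le> card (S i) - 1"
        using \<open>s \<in> S i\<close> fin[OF i] by simp
    qed
    finally show ?thesis .
  qed
  have "PiE K S - Good \<subseteq> (\<Union>I\<in>F. Miss I)"
    by (auto simp: Good_def Miss_def PiE_iff)
  then have "card (PiE K S - Good) \<le> card (\<Union>I\<in>F. Miss I)"
    using F finMiss by (intro card_mono) auto
  also have "\<dots> \<le> (\<Sum>I\<in>F. card (Miss I))" by (rule card_UN_le[OF F])
  also have "\<dots> \<le> of_nat (card F) * (\<Prod>i\<in>K. card (S i) - 1)"
    by (rule sum_bounded_above) (rule card_Miss)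
  finally have "card (PiE K S - Good) \<le> card F * (\<Prod>i\<in>K. card (S i) - 1)" by simp
  moreover have "card (PiE K S) \<le> card Good + card (PiE K S - Good)"
    using K fin by (simp add: finite_PiE card_Diff_subset Good_def card_mono)
  ultimately show ?thesis unfolding Good_def by linarith
qed

lemma prod_diff_one_le:
  fixes c :: real
  assumes "\<And>i. i \<in> K \<Longrightarrow> real (f i) \<le> c" and "c > 0"
  shows "real (\<Prod>i\<in>K. f i - 1) \<le> real (\<Prod>i\<in>K. f i) * (1 - 1 / c) ^ card K"
proof -
  have "real (\<Prod>i\<in>K. f i - 1) = (\<Prod>i\<in>K. real (f i - 1))" by simp
  also have "\<dots> \<le> (\<Prod>i\<in>K. real (f i) * (1 - 1 / c))"
  proof (rule prod_mono)
    fix i assume "i \<in> K"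
    then have "real (f i) / c \<le> 1" using assms by simp
    then show "0 \<le> real (f i - 1) \<and> real (f i - 1) \<le> real (f i) * (1 - 1 / c)"
      by (cases "f i = 0") (auto simp: of_nat_diff algebra_simps)
  qed
  also have "\<dots> = real (\<Prod>i\<in>K. f i) * (1 - 1 / c) ^ card K" by (simp add: prod.distrib)
  finally show ?thesis .
qed

lemma ln_6_le_2: "ln (6::real) \<le> 2"
proof -
  have "5 / 2 \<le> exp (1::real)" using exp_lower_Taylor_quadratic[of 1] by simp
  then have "5 / 2 * (5 / 2) \<le> exp (1::real) * exp 1" by (intro mult_mono) auto
  then have "6 \<le> exp (2::real)" by (simp add: exp_add[symmetric])
  then have "ln 6 \<le> ln (exp (2::real))" by (subst ln_le_cancel_iff) auto
  then show ?thesis by simp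
qed

lemma one_minus_inverse_power_le:
  fixes c :: real and m \<rho> :: nat
  assumes "c \<ge> 1" and "real m * c * ln c \<le> real \<rho>"
  shows "(1 - 1 / c) ^ \<rho> \<le> 1 / c ^ m"
proof -
  have "(1 - 1 / c) ^ \<rho> \<le> exp (- (1 / c)) ^ \<rho>"
    using exp_ge_add_one_self[of "- (1 / c)"] \<open>c \<ge> 1\<close> by (intro power_mono) auto
  also have "\<dots> = exp (- (real \<rho> / c))" by (simp add: exp_of_nat_mult[symmetric])
  also have "\<dots> \<le> exp (- (real m * ln c))"
    using assms by (simp add: pos_le_divide_eq mult.commute mult.left_commute)
  also have "\<dots> = 1 / c ^ m"
    using \<open>c \<ge> 1\<close> by (simp add: exp_minus ln_realpow[symmetric] inverse_eq_divide)
  finally show ?thesis .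
qed

lemma rho_mult_power_le_eleven_twelfths:
  fixes k \<rho> :: nat
  assumes "k \<ge> 1" and rho: "\<rho> = nat \<lceil>18 * real k * ln (6 * real k)\<rceil>"
  shows "real \<rho> * (6 * real k - 1) * (1 - 1 / (6 * real k)) ^ \<rho> \<le> 11 / 12"
proof -
  define K where "K = real k"
  define c where "c = 6 * K"
  have K: "K \<ge> 1" using \<open>k \<ge> 1\<close> by (simp add: K_def)
  have c6: "c \<ge> 6" using K by (simp add: c_def)
  have "ln c = ln 6 + ln K" using K by (simp add: c_def ln_mult)
  then have ln_c: "ln c \<le> K + 1" using ln_le_minus_one[of K] ln_6_le_2 K by linarith
  have rho_c: "\<rho> = nat \<lceil>3 * c * ln c\<rceil>" by (simp add: rho K_def c_def)
  have "3 * c * ln c \<ge> 0" using c6 by simp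
  then have "real \<rho> \<le> 3 * c * ln c + 1" using rho_c of_int_ceiling_le_add_one[of "3 * c * ln c"] by simp
  also have "\<dots> \<le> 18 * K * (K + 1) + 1" using ln_c K by (simp add: c_def)
  finally have rho_le: "real \<rho> \<le> 18 * K * (K + 1) + 1" .
  have "(1 - 1 / c) ^ \<rho> \<le> 1 / c ^ 3"
    using rho_c c6 real_nat_ceiling_ge[of "3 * c * ln c"] by (intro one_minus_inverse_power_le) auto
  then have "real \<rho> * (c - 1) * (1 - 1 / c) ^ \<rho> \<le> (18 * K * (K + 1) + 1) * (c - 1) * (1 / c ^ 3)"
    using rho_le c6 by (intro mult_mono) auto
  also have "\<dots> \<le> 11 / 12"
  proof -
    have "K ^ 2 \<le> K ^ 3" using K by (simp add: power_increasing)
    moreover have "(18 * K * (K + 1) + 1) * (6 * K - 1) = 108 * K ^ 3 + 90 * K ^ 2 - 12 * K - 1"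
      by (simp add: algebra_simps power2_eq_square power3_eq_cube)
    moreover have "(6 * K) ^ 3 = 216 * K ^ 3" by (simp add: power_mult_distrib)
    ultimately have "(18 * K * (K + 1) + 1) * (6 * K - 1) \<le> 11 / 12 * (6 * K) ^ 3"
      using K by linarith
    then show ?thesis using c6 by (simp add: c_def field_simps)
  qed
  finally show ?thesis by (simp add: c_def K_def)
qed

lemma union_bound_le_eleven_twelfths:
  fixes k \<rho> m :: nat
  assumes "k \<ge> 1" and rho: "\<rho> = nat \<lceil>18 * real k * ln (6 * real k)\<rceil>"
    and "m \<le> \<rho> * (6 * k - 1)"
  shows "real m * (1 - 1 / (6 * real k)) ^ \<rho> \<le> 11 / 12"
proof -
  have "real m \<le> real (\<rho> * (6 * k - 1))" using \<open>m \<le> \<rho> * (6 * k - 1)\<close> by (simp only: of_nat_le_iff)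
  then have "real m * (1 - 1 / (6 * real k)) ^ \<rho>
      \<le> real (\<rho> * (6 * k - 1)) * (1 - 1 / (6 * real k)) ^ \<rho>"
    by (rule mult_right_mono) (use \<open>k \<ge> 1\<close> in simp)
  also have "\<dots> = real \<rho> * (6 * real k - 1) * (1 - 1 / (6 * real k)) ^ \<rho>"
    using \<open>k \<ge> 1\<close> by (simp add: of_nat_diff)
  also have "\<dots> \<le> 11 / 12" by (rule rho_mult_power_le_eleven_twelfths[OF \<open>k \<ge> 1\<close> rho])
  finally show ?thesis .
qed

lemma card_covering_tuples_ge:
  fixes c :: real
  assumes K: "finite K" and F: "finite F" and fin: "\<And>i. i \<in> K \<Longrightarrow> finite (S i)"
    and size: "\<And>i. i \<in> K \<Longrightarrow> real (card (S i)) \<le> c" and "c > 0"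
    and hit: "\<And>I i. I \<in> F \<Longrightarrow> i \<in> K \<Longrightarrow> \<exists>s\<in>S i. P I i s"
  shows "real (card (PiE K S)) * (1 - real (card F) * (1 - 1 / c) ^ card K)
    \<le> real (card {f \<in> PiE K S. \<forall>I\<in>F. \<exists>i\<in>K. P I i (f i)})"
proof -
  define Q where "Q = (\<Prod>i\<in>K. card (S i) - 1)"
  have "card (PiE K S) \<le> card {f \<in> PiE K S. \<forall>I\<in>F. \<exists>i\<in>K. P I i (f i)} + card F * Q"
    unfolding Q_def using K F fin hit by (rule card_PiE_le_covering_plus_missing)
  then have "real (card (PiE K S))
      \<le> real (card {f \<in> PiE K S. \<forall>I\<in>F. \<exists>i\<in>K. P I i (f i)}) + real (card F) * real Q"
    by (simp only: of_nat_add[symmetric] of_nat_mult[symmetric] of_nat_le_iff)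
  moreover have "real Q \<le> real (\<Prod>i\<in>K. card (S i)) * (1 - 1 / c) ^ card K"
    unfolding Q_def by (rule prod_diff_one_le[OF size \<open>c > 0\<close>])
  then have "real Q \<le> real (card (PiE K S)) * (1 - 1 / c) ^ card K" using K by (simp add: card_PiE)
  then have "real (card F) * real Q \<le> real (card (PiE K S)) * (real (card F) * (1 - 1 / c) ^ card K)"
    by (simp add: mult_left_mono mult.left_commute)
  ultimately show ?thesis by (simp add: algebra_simps)
qed

lemma card_covering_epoch_tuples_ge:
  fixes S :: "nat \<Rightarrow> nat set" and p :: "nat \<Rightarrow> nat \<Rightarrow> nat" and k \<rho> N :: nat
  assumes "k \<ge> 1" and rho: "\<rho> = nat \<lceil>18 * real k * ln (6 * real k)\<rceil>"
    and epochs: "\<And>i. i \<in> {1..\<rho>} \<Longrightarrow> S i \<subseteq> {1..N} \<and> card (S i) < 6 * k \<and>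
      (\<forall>s\<in>S i. p i s \<in> {1..N}) \<and> (\<Union>s\<in>S i. cint N s (p i s)) = {1..N}"
  shows "real (card {f \<in> PiE {1..\<rho>} S. \<forall>I\<in>interval_family N (\<Union>i\<in>{1..\<rho>}. S i).
      \<exists>i\<in>{1..\<rho>}. I \<subseteq> cint N (f i) (p i (f i))}) \<ge> 1 / 12 * real (card (PiE {1..\<rho>} S))"
proof -
  define M where "M = (\<Union>i\<in>{1..\<rho>}. S i)"
  have M: "M \<subseteq> {1..N}" unfolding M_def by (rule UN_least) (use epochs in blast)
  then have "finite M" using finite_subset by blast
  have "card (S i) \<le> 6 * k - 1" if "i \<in> {1..\<rho>}" for i
    using epochs[OF that] by (simp add: less_Suc_eq_le[symmetric])
  then have "card (interval_family N M) \<le> \<rho> * (6 * k - 1)"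
    unfolding M_def using card_interval_family_UN_le[of "{1..\<rho>}" S] by simp
  then have union_bound: "real (card (interval_family N M)) * (1 - 1 / (6 * real k)) ^ \<rho> \<le> 11 / 12"
    by (rule union_bound_le_eleven_twelfths[OF \<open>k \<ge> 1\<close> rho])
  define P where "P = PiE {1..\<rho>} S"
  define Good where
    "Good = {f \<in> P. \<forall>I\<in>interval_family N M. \<exists>i\<in>{1..\<rho>}. I \<subseteq> cint N (f i) (p i (f i))}"
  have covering: "real (card P) *
      (1 - real (card (interval_family N M)) * (1 - 1 / (6 * real k)) ^ card {1..\<rho>})
      \<le> real (card Good)"
    unfolding Good_def P_def
  proof (rule card_covering_tuples_ge)
    fix I i assume "I \<in> interval_family N M" and i: "i \<in> {1..\<rho>}"
    then show "\<exists>s\<in>S i. I \<subseteq> cint N s (p i s)"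
      using epochs[OF i] by (intro interval_family_subset_cint[OF \<open>finite M\<close> M]) (auto simp: M_def)
  next
    fix i assume "i \<in> {1..\<rho>}"
    then have "S i \<subseteq> {1..N}" using epochs by blast
    then show "finite (S i)" by (rule finite_subset) simp
  next
    fix i assume "i \<in> {1..\<rho>}"
    then have "card (S i) < 6 * k" using epochs by blast
    then show "real (card (S i)) \<le> 6 * real k" by simp
  qed (use \<open>k \<ge> 1\<close> in \<open>simp_all add: finite_interval_family\<close>)
  have "1 / 12 \<le> 1 - real (card (interval_family N M)) * (1 - 1 / (6 * real k)) ^ \<rho>"
    using union_bound by simp
  then have "1 / 12 * real (card P)
      \<le> (1 - real (card (interval_family N M)) * (1 - 1 / (6 * real k)) ^ \<rho>) * real (card P)"
    by (rule mult_right_mono) simp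
  also have "\<dots> \<le> real (card Good)" using covering by (simp add: mult.commute)
  finally show ?thesis unfolding Good_def P_def M_def .
qed

section \<open>Epochs of k-edge-deficient snapshots\<close>

lemma sorted_list_of_set_nth_mem: "i < card F \<Longrightarrow> sorted_list_of_set F ! i \<in> F"
  by (metis card.infinite not_less0 length_sorted_list_of_set nth_mem set_sorted_list_of_set)

lemma card_blocked_tour_edges_le:
  assumes "finite T" and tour: "dfs_tour T r N v" and e: "\<forall>q. e q = {v q, v (Suc q)}"
    and "edge_deficient k T E"
  shows "card {q\<in>{1..N}. e q \<notin> E} \<le> 2 * k"
proof -
  have "{q\<in>{1..N}. e q \<notin> E} = (\<Union>f\<in>T - E. {q\<in>{1..N}. {v q, v (Suc q)} = f})"
    using tour e by (auto simp: dfs_tour_def)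
  then have "card {q\<in>{1..N}. e q \<notin> E} \<le> (\<Sum>f\<in>T - E. card {q\<in>{1..N}. {v q, v (Suc q)} = f})"
    using card_UN_le[of "T - E"] \<open>finite T\<close> by simp
  also have "\<dots> = 2 * card (T - E)"
    using tour by (simp add: dfs_tour_def)
  finally show ?thesis using \<open>edge_deficient k T E\<close> by (simp add: edge_deficient_def)
qed

lemma roundabout_active_survivors:
  assumes "finite T" and tour: "dfs_tour T r N v" and e: "\<forall>q. e q = {v q, v (Suc q)}"
    and act: "roundabout_active N e H t A" and "t < N" and "N < 2 * k * (t + 1)"
    and deficient: "\<And>x. x \<in> {1..t} \<Longrightarrow> edge_deficient k T (H x)"
  shows "A t \<subseteq> {1..N}" and "card (A t) < 6 * k" and "\<forall>s\<in>A t. rstate N e H s t \<in> {1..N}"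
    and "(\<Union>s\<in>A t. cint N s (rstate N e H s t)) = {1..N}"
proof -
  have "\<forall>x\<in>{1..t}. card {q\<in>{1..N}. e q \<notin> H x} \<le> 2 * k"
    using card_blocked_tour_edges_le[OF \<open>finite T\<close> tour e] deficient by blast
  from card_roundabout_active_less[OF act \<open>t < N\<close> \<open>N < 2 * k * (t + 1)\<close> this]
  show "card (A t) < 6 * k" by simp
  show "A t \<subseteq> {1..N}" and "(\<Union>s\<in>A t. cint N s (rstate N e H s t)) = {1..N}"
    using roundabout_active_cover[OF act \<open>t < N\<close> order_refl] by (simp_all add: visited_def)
  then show "\<forall>s\<in>A t. rstate N e H s t \<in> {1..N}" using rstate_in_range by blast
qed

theorem lemma12:
  fixes V :: "'a set" and n k \<Delta> L N t \<rho> :: nat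
    and G :: "nat \<Rightarrow> 'a set set" and T :: "'a set set" and r :: 'a
    and v :: "nat \<Rightarrow> 'a" and e :: "nat \<Rightarrow> 'a set"
    and b :: "nat \<Rightarrow> nat"
    and H :: "nat \<Rightarrow> nat \<Rightarrow> 'a set set"
    and Act :: "nat \<Rightarrow> nat \<Rightarrow> nat set"
    and S :: "nat \<Rightarrow> nat set"
  assumes finV: "finite V" and cardV: "card V = n" and n2: "n \<ge> 2" and k1: "k \<ge> 1"
    and graphs: "\<forall>x\<in>{1..L}. simple_graph V (G x)"
    and tree: "spanning_tree V (\<Union>x\<in>{1..L}. G x) T"
    and N_def: "N = 2 * (n - 1)"
    and root: "r \<in> V"
    and tour: "dfs_tour T r N v"
    and e_def: "\<forall>q. e q = {v q, v (Suc q)}"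
    and t_def: "t = N div (2 * k)"
    and rho_def: "\<rho> = nat \<lceil>18 * real k * ln (6 * real k)\<rceil>"
    and b0: "b 0 = 0"
    and b_mono: "\<forall>i<\<rho>. b i < b (Suc i)"
    and bL: "b \<rho> \<le> L"
    and epoch_def: "\<forall>i\<in>{1..\<rho>}.
        card {x\<in>{b (i - 1)<..b i}. edge_deficient k T (G x)} \<ge> \<Delta> + t"
    and round_def: "\<forall>i\<in>{1..\<rho>}.
        card {x\<in>{b (i - 1) + \<Delta><..b i}. edge_deficient k T (G x)} \<ge> t"
    and H_def: "\<forall>i\<in>{1..\<rho>}. \<forall>\<tau>\<in>{1..t}. H i \<tau> =
        G (sorted_list_of_set {x\<in>{b (i - 1) + \<Delta><..b i}. edge_deficient k T (G x)} ! (\<tau> - 1))"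
    and active: "\<forall>i\<in>{1..\<rho>}. roundabout_active N e (H i) t (Act i)"
    and S_def: "\<forall>i\<in>{1..\<rho>}. S i = Act i t"
  shows "real (card {tup \<in> PiE {1..\<rho>} S.
            \<forall>I\<in>interval_family N (\<Union>i\<in>{1..\<rho>}. S i).
              \<exists>i\<in>{1..\<rho>}. I \<subseteq> visited N e (H i) (tup i) t})
         \<ge> (1 / 12) * real (card (PiE {1..\<rho>} S))"
proof -
  have "N \<ge> 2" using n2 N_def by simp
  then have "t < N" and "N < 2 * k * (t + 1)"
    using k1 t_def div_le_mono2[of 2 "2 * k" N] dividend_less_div_times[of "2 * k" N]
    by (simp_all add: mult.commute)
  have "T \<subseteq> (\<Union>x\<in>{1..L}. G x)" using tree by (simp add: spanning_tree_def)
  also have "\<dots> \<subseteq> Pow V" using graphs by (auto simp: simple_graph_def)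
  finally have "finite T" using finV by (simp add: finite_subset)
  have deficient: "edge_deficient k T (H i x)" if i: "i \<in> {1..\<rho>}" and x: "x \<in> {1..t}" for i x
  proof -
    define F where "F = {x\<in>{b (i - 1) + \<Delta><..b i}. edge_deficient k T (G x)}"
    have "x - 1 < card F" using round_def i x by (fastforce simp: F_def)
    then have "sorted_list_of_set F ! (x - 1) \<in> F" by (rule sorted_list_of_set_nth_mem)
    then show ?thesis using H_def i x by (simp add: F_def)
  qed
  have "S i \<subseteq> {1..N} \<and> card (S i) < 6 * k \<and> (\<forall>s\<in>S i. rstate N e (H i) s t \<in> {1..N}) \<and>
      (\<Union>s\<in>S i. cint N s (rstate N e (H i) s t)) = {1..N}" if i: "i \<in> {1..\<rho>}" for i
  proof -
    have "roundabout_active N e (H i) t (Act i)" using active i by blast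
    from roundabout_active_survivors[OF \<open>finite T\<close> tour e_def this \<open>t < N\<close>
        \<open>N < 2 * k * (t + 1)\<close> deficient[OF i]]
    show ?thesis using S_def i by simp
  qed
  from card_covering_epoch_tuples_ge[OF k1 rho_def this] show ?thesis by (simp add: visited_def)
qed

end
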